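(* Let $X$, $Y$, $W$ be metric spaces, $f:X\times Y\to W$ continuous and $w\in W$. Suppose $X$ is simply connected, $\mathcal P$-connected and locally $\mathcal P$-contractible for some family $\mathcal P$ of paths in $X$. Suppose that the projection $\pi:Z_w\to X$ is a local homeomorphism having the continuation property for every path in $\mathcal P$. Then $\pi:Z_w\to X$ is a covering projection and, for every connected component $C_w$ of $Z_w$, the restriction $\pi|_{C_w}:C_w\to X$ is a homeomorphism.
   Context: $Z_w=\{(x,y)\in X\times Y: f(x,y)=w\}$ with the metric inherited from $X\times Y$, and $\pi(x,y)=x$. A family $\mathcal P$ of continuous paths $p:[0,1]\to X$ is given. $X$ is $\mathcal P$-connected if the reverse $\bar p(t)=p(1-t)$ of every $p\in\mathcal P$ lies in $\mathcal P$ and any two points of $X$ are joined by a path in $\mathcal P$. $X$ is locally $\mathcal P$-contractible if every $x_0\in X$ has an open neighborhood $U$ with a continuous homotopy $H:U\times[0,1]\to U$ with $H(x_0,t)=x_0$, $H(x,0)=x_0$, $H(x,1)=x$, and each path $t\mapsto H(x,t)$ in $\mathcal P$. A continuous $g:Z\to X$ has the continuation property for $p:[0,1]\to X$ if for every $b\in(0,1]$ and continuous $q:[0,b)\to Z$ with $g\circ q=p$ on $[0,b)$ there is $t_n\to b$ in $[0,b)$ with $(q(t_n))$ convergent in $Z$. *)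

theory Defs
  imports "HOL-Analysis.Analysis"
begin

text \<open>A path g (a function on [0,1]) belongs to the family P, where members of P are
  compared on [0,1] only (HOL functions are total).\<close>
definition in_paths :: "(real \<Rightarrow> 'a) set \<Rightarrow> (real \<Rightarrow> 'a) \<Rightarrow> bool" where
  "in_paths P g \<longleftrightarrow> (\<exists>p\<in>P. \<forall>t\<in>{0..1}. p t = g t)"

definition P_connected :: "(real \<Rightarrow> 'a::topological_space) set \<Rightarrow> bool" where
  "P_connected P \<longleftrightarrow>
     (\<forall>p\<in>P. in_paths P (reversepath p)) \<and>
     (\<forall>a b. \<exists>p\<in>P. pathstart p = a \<and> pathfinish p = b)"

definition locally_P_contractible :: "(real \<Rightarrow> 'a::topological_space) set \<Rightarrow> bool" where
  "locally_P_contractible P \<longleftrightarrow>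
     (\<forall>x0. \<exists>U. open U \<and> x0 \<in> U \<and>
        (\<exists>H. continuous_on (U \<times> {0..1}) H \<and> H ` (U \<times> {0..1}) \<subseteq> U \<and>
             (\<forall>t\<in>{0..1}. H (x0, t) = x0) \<and>
             (\<forall>x\<in>U. H (x, 0) = x0 \<and> H (x, 1) = x) \<and>
             (\<forall>x\<in>U. in_paths P (\<lambda>t. H (x, t)))))"

definition local_homeomorphism :: "'a::topological_space set \<Rightarrow> ('a \<Rightarrow> 'b::topological_space) \<Rightarrow> 'b set \<Rightarrow> bool" where
  "local_homeomorphism Z g S \<longleftrightarrow> g ` Z \<subseteq> S \<and>
     (\<forall>z\<in>Z. \<exists>U. z \<in> U \<and> openin (top_of_set Z) U \<and> openin (top_of_set S) (g ` U) \<and>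
                (\<exists>h. homeomorphism U (g ` U) g h))"

definition continuation_property :: "'a::metric_space set \<Rightarrow> ('a \<Rightarrow> 'b) \<Rightarrow> (real \<Rightarrow> 'b) \<Rightarrow> bool" where
  "continuation_property Z g p \<longleftrightarrow>
     (\<forall>b\<in>{0<..1}. \<forall>q. continuous_on {0..<b} q \<and> q ` {0..<b} \<subseteq> Z \<and>
                       (\<forall>t\<in>{0..<b}. g (q t) = p t) \<longrightarrow>
        (\<exists>tn. (\<forall>n. tn n \<in> {0..<b}) \<and> tn \<longlonglongrightarrow> b \<and> (\<exists>z\<in>Z. (q \<circ> tn) \<longlonglongrightarrow> z)))"

end

theory Submission
  imports Defs
begin

text \<open>
The projection is a local homeomorphism along which every path of \<open>P\<close> lifts: a lift defined
on \<open>[0, b)\<close> converges along a sequence by the continuation property and is then continued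
through a chart, so the supremum of the lifting times is attained and equals 1; lifts are unique
because two of them agree on a clopen subset of a connected parameter set. Over a
\<open>P\<close>-contractible neighbourhood \<open>U\<close> of \<open>x\<^sub>0\<close>, lifting the tracks \<open>t \<mapsto> H (x, t)\<close> of the
contraction from each point of the fibre over \<open>x\<^sub>0\<close> gives continuous sections over \<open>U\<close>, and
their images are disjoint open sheets exhausting the preimage of \<open>U\<close>: the projection is a
covering. A covering of a simply connected, locally path-connected space has a global section
through every point, and uniqueness of lifts makes that section inverse to the projection on the
component of the point. For metric spaces the section comes from the library's lifting theorem
for normed spaces via the Kuratowski embedding into bounded continuous functions.
\<close>

section \<open>Coverings of metric spaces\<close>

lemma metric_space_isometric_embedding:
  obtains e :: "'a::metric_space \<Rightarrow> ('a \<Rightarrow>\<^sub>C real)" where "\<And>x y. dist (e x) (e y) = dist x y"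
proof -
  fix a :: 'a
  define F where "F x = (\<lambda>y. dist x y - dist a y)" for x
  have F_bcontfun: "F x \<in> bcontfun" for x
  proof (rule bcontfun_normI)
    show "continuous_on UNIV (F x)"
      unfolding F_def by (intro continuous_intros)
    show "norm (F x y) \<le> dist x a" for y
      unfolding F_def using dist_triangle2[of x y a] dist_triangle2[of a y x]
      by (auto simp: dist_commute)
  qed
  define e where "e x = Bcontfun (F x)" for x
  have apply_e: "apply_bcontfun (e x) = F x" for x
    unfolding e_def using F_bcontfun by (simp add: Bcontfun_inverse)
  have "dist (e x) (e y) = dist x y" for x y
  proof (rule antisym)
    show "dist (e x) (e y) \<le> dist x y"
      by (rule dist_bound) (simp add: apply_e F_def dist_real_def,
          metis abs_dist_diff_le dist_commute)
    have "dist (apply_bcontfun (e x) y) (apply_bcontfun (e y) y) \<le> dist (e x) (e y)"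
      by (rule dist_bounded)
    then show "dist x y \<le> dist (e x) (e y)"
      by (simp add: apply_e F_def dist_real_def)
  qed
  then show ?thesis
    by (rule that)
qed

lemma isometry_homeomorphism:
  assumes "\<And>x y. dist (e x) (e y) = dist x y"
  shows "homeomorphism S (e ` S) e (inv_into S e)"
proof -
  have "inj e"
    using assms by (metis dist_eq_0_iff injI)
  moreover have "continuous_on T e" for T
    using assms by (auto simp: continuous_on_iff)
  moreover have "continuous_on (e ` S) (inv_into S e)"
  proof -
    have "dist (inv_into S e y') (inv_into S e y) = dist y' y" if "y \<in> e ` S" "y' \<in> e ` S" for y y'
      using assms that by (metis f_inv_into_f)
    then show ?thesis
      by (auto simp: continuous_on_iff)
  qed
  ultimately show ?thesis
    by (simp add: homeomorphism_def inj_on_subset image_inv_into_cancel)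
qed

lemma homeomorphism_into_bcontfun:
  obtains e :: "'a::metric_space \<Rightarrow> ('a \<Rightarrow>\<^sub>C real)"
  where "\<And>S. homeomorphism S (e ` S) e (inv_into S e)"
  by (metis metric_space_isometric_embedding isometry_homeomorphism)

lemma simply_connected_imp_path_connected_metric:
  fixes S :: "'a::metric_space set"
  assumes "simply_connected S"
  shows "path_connected S"
proof -
  obtain e :: "'a \<Rightarrow> ('a \<Rightarrow>\<^sub>C real)" where e: "homeomorphism S (e ` S) e (inv_into S e)"
    using homeomorphism_into_bcontfun by metis
  then have "S homeomorphic e ` S"
    by (auto simp: homeomorphic_def)
  then show ?thesis
    using assms homeomorphic_simply_connected simply_connected_imp_path_connected
      homeomorphic_path_connectedness by blast
qed

lemma covering_space_compose_homeomorphism_base: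
  assumes cov: "covering_space C p S" and hom: "homeomorphism S S' f f'"
  shows "covering_space C (f \<circ> p) S'"
proof
  have p: "continuous_on C p" "p ` C = S"
    using cov by (auto simp: covering_space_def)
  show "continuous_on C (f \<circ> p)"
    using p hom by (metis continuous_on_compose homeomorphism_def)
  show "(f \<circ> p) ` C = S'"
    using p hom by (metis homeomorphism_def image_comp)
  fix x' assume "x' \<in> S'"
  then have x': "f' x' \<in> S" "f (f' x') = x'"
    using hom by (auto simp: homeomorphism_def)
  then obtain T v where T: "f' x' \<in> T" "openin (top_of_set S) T"
    and v: "\<Union>v = C \<inter> p -` T" "\<forall>u \<in> v. openin (top_of_set C) u" "pairwise disjnt v"
           "\<forall>u \<in> v. \<exists>q. homeomorphism u T p q"
    using cov unfolding covering_space_def by metis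
  have "T \<subseteq> S"
    using T openin_imp_subset by blast
  have hom_T: "homeomorphism T (f ` T) f f'"
    by (rule homeomorphism_of_subsets[OF hom \<open>T \<subseteq> S\<close> _ refl])
       (use hom \<open>T \<subseteq> S\<close> in \<open>auto simp: homeomorphism_def\<close>)
  have preimage: "C \<inter> p -` T = C \<inter> (f \<circ> p) -` (f ` T)"
  proof (intro set_eqI iffI)
    fix y assume "y \<in> C \<inter> (f \<circ> p) -` (f ` T)"
    then obtain t where "y \<in> C" "t \<in> T" "f (p y) = f t"
      by auto
    moreover have "f' (f a) = a" if "a \<in> S" for a
      using hom that by (simp add: homeomorphism_def)
    ultimately have "p y = t"
      using p(2) \<open>T \<subseteq> S\<close> by (metis imageI subsetD)
    then show "y \<in> C \<inter> p -` T"
      using \<open>y \<in> C\<close> \<open>t \<in> T\<close> by simp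
  qed auto
  have sheets: "\<exists>q. homeomorphism u (f ` T) (f \<circ> p) q" if "u \<in> v" for u
    using v(4) that homeomorphism_compose[OF _ hom_T] by blast
  show "\<exists>T'. x' \<in> T' \<and> openin (top_of_set S') T' \<and>
           (\<exists>v. \<Union>v = C \<inter> (f \<circ> p) -` T' \<and> (\<forall>u \<in> v. openin (top_of_set C) u) \<and>
             pairwise disjnt v \<and> (\<forall>u \<in> v. \<exists>q. homeomorphism u T' (f \<circ> p) q))"
  proof (intro exI[of _ "f ` T"] exI[of _ v] conjI)
    show "x' \<in> f ` T"
      using T(1) x'(2) by (metis imageI)
    show "openin (top_of_set S') (f ` T)"
      using homeomorphism_imp_open_map[OF hom T(2)] .
    show "\<Union>v = C \<inter> (f \<circ> p) -` (f ` T)"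
      using v(1) preimage by simp
    show "\<forall>u \<in> v. openin (top_of_set C) u" "pairwise disjnt v"
      using v(2,3) .
    show "\<forall>u \<in> v. \<exists>q. homeomorphism u (f ` T) (f \<circ> p) q"
      using sheets by blast
  qed
qed

lemma covering_space_compose_homeomorphism_total:
  assumes cov: "covering_space C p S" and hom: "homeomorphism C' C f f'"
  shows "covering_space C' (p \<circ> f) S"
proof
  have p: "continuous_on C p" "p ` C = S"
    using cov by (auto simp: covering_space_def)
  show "continuous_on C' (p \<circ> f)"
    using p hom by (metis continuous_on_compose homeomorphism_def)
  show "(p \<circ> f) ` C' = S"
    using p hom by (metis homeomorphism_def image_comp)
  fix x assume "x \<in> S"
  then obtain T v where T: "x \<in> T" "openin (top_of_set S) T"
    and v: "\<Union>v = C \<inter> p -` T" "\<forall>u \<in> v. openin (top_of_set C) u" "pairwise disjnt v"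
           "\<forall>u \<in> v. \<exists>q. homeomorphism u T p q"
    using cov unfolding covering_space_def by metis
  have inj: "inj_on f' C"
    using hom by (metis homeomorphism_def inj_on_inverseI)
  have "\<Union>((`) f' ` v) = f' ` (C \<inter> p -` T)"
    using v(1) by blast
  also have "\<dots> = C' \<inter> (p \<circ> f) -` T"
  proof (intro set_eqI iffI)
    fix y assume "y \<in> C' \<inter> (p \<circ> f) -` T"
    then have "f y \<in> C \<inter> p -` T" "f' (f y) = y"
      using hom by (auto simp: homeomorphism_def)
    then show "y \<in> f' ` (C \<inter> p -` T)"
      by (metis image_eqI)
  qed (use hom in \<open>auto simp: homeomorphism_def\<close>)
  finally have union: "\<Union>((`) f' ` v) = C' \<inter> (p \<circ> f) -` T" .
  have opens: "\<forall>u \<in> (`) f' ` v. openin (top_of_set C') u"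
    using v(2) homeomorphism_imp_open_map[OF homeomorphism_symD[OF hom]] by blast
  have disj: "pairwise disjnt ((`) f' ` v)"
  proof (rule pairwiseI)
    fix a b assume "a \<in> (`) f' ` v" "b \<in> (`) f' ` v" "a \<noteq> b"
    then obtain u1 u2 where "u1 \<in> v" "u2 \<in> v" "a = f' ` u1" "b = f' ` u2" "u1 \<noteq> u2"
      by blast
    moreover have "u1 \<subseteq> C" "u2 \<subseteq> C"
      using \<open>u1 \<in> v\<close> \<open>u2 \<in> v\<close> v(1) by blast+
    moreover have "u1 \<inter> u2 = {}"
      using v(3) \<open>u1 \<in> v\<close> \<open>u2 \<in> v\<close> \<open>u1 \<noteq> u2\<close> by (meson disjnt_def pairwiseD)
    ultimately show "disjnt a b"
      using inj by (simp add: disjnt_def inj_on_image_Int[symmetric])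
  qed
  have sheets: "\<exists>q. homeomorphism a T (p \<circ> f) q" if "a \<in> (`) f' ` v" for a
  proof -
    obtain u q where u: "u \<in> v" "a = f' ` u" and q: "homeomorphism u T p q"
      using \<open>a \<in> (`) f' ` v\<close> v(4) by blast
    have "u \<subseteq> C"
      using u v(1) by blast
    then have "homeomorphism u (f' ` u) f' f"
      using hom by (intro homeomorphism_of_subsets[OF homeomorphism_symD[OF hom]])
        (auto simp: homeomorphism_def)
    then have "homeomorphism (f' ` u) u f f'"
      by (rule homeomorphism_symD)
    then show ?thesis
      using homeomorphism_compose[OF _ q] u by blast
  qed
  show "\<exists>T. x \<in> T \<and> openin (top_of_set S) T \<and>
           (\<exists>v. \<Union>v = C' \<inter> (p \<circ> f) -` T \<and> (\<forall>u \<in> v. openin (top_of_set C') u) \<and>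
             pairwise disjnt v \<and> (\<forall>u \<in> v. \<exists>q. homeomorphism u T (p \<circ> f) q))"
  proof (intro exI[of _ T] exI[of _ "(`) f' ` v"] conjI)
    show "\<forall>u \<in> (`) f' ` v. \<exists>q. homeomorphism u T (p \<circ> f) q"
      using sheets by blast
  qed (use T union opens disj in auto)
qed

lemma continuous_on_ball_into_open:
  fixes f :: "'a::metric_space \<Rightarrow> 'b::metric_space"
  assumes "continuous_on S f" "x \<in> S" "open W" "f x \<in> W"
  obtains d where "d > 0" "\<And>y. y \<in> S \<Longrightarrow> dist y x < d \<Longrightarrow> f y \<in> W"
proof -
  obtain e where e: "e > 0" "ball (f x) e \<subseteq> W"
    using assms(3,4) open_contains_ball by blast
  obtain d where "d > 0" "\<And>y. y \<in> S \<Longrightarrow> dist y x < d \<Longrightarrow> dist (f y) (f x) < e"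
    using assms(1,2) e(1) unfolding continuous_on_iff by metis
  then show ?thesis
    using that e(2) by (auto simp: dist_commute subset_iff)
qed

lemma dist_Pair_lt:
  fixes x x1 :: "'b::metric_space" and t t1 :: "'c::metric_space"
  assumes "dist x x1 < e / 2" "dist t t1 < e / 2"
  shows "dist (x, t) (x1, t1) < e"
proof -
  have "dist (x, t) (x1, t1) \<le> dist x x1 + dist t t1"
    unfolding dist_Pair_Pair using sqrt_sum_squares_le_sum_abs[of "dist x x1" "dist t t1"] by simp
  then show ?thesis
    using assms by linarith
qed

lemma covering_space_bcontfun_model:
  fixes p :: "'a::metric_space \<Rightarrow> 'b::metric_space"
  assumes "covering_space C p S"
  obtains eC :: "'a \<Rightarrow> ('a \<Rightarrow>\<^sub>C real)" and iC and eS :: "'b \<Rightarrow> ('b \<Rightarrow>\<^sub>C real)"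
  where "homeomorphism (eC ` C) C iC eC" "homeomorphism S (eS ` S) eS (inv_into S eS)"
    "covering_space (eC ` C) (eS \<circ> p \<circ> iC) (eS ` S)"
proof -
  obtain eC :: "'a \<Rightarrow> ('a \<Rightarrow>\<^sub>C real)" where "homeomorphism C (eC ` C) eC (inv_into C eC)"
    using homeomorphism_into_bcontfun by metis
  then have hC: "homeomorphism (eC ` C) C (inv_into C eC) eC"
    by (rule homeomorphism_symD)
  obtain eS :: "'b \<Rightarrow> ('b \<Rightarrow>\<^sub>C real)" where eS: "homeomorphism S (eS ` S) eS (inv_into S eS)"
    using homeomorphism_into_bcontfun by metis
  have "covering_space (eC ` C) (eS \<circ> p \<circ> inv_into C eC) (eS ` S)"
    using covering_space_compose_homeomorphism_total
      [OF covering_space_compose_homeomorphism_base[OF assms eS] hC] .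
  with hC eS show ?thesis
    by (rule that)
qed

lemma covering_space_global_section:
  fixes p :: "'a::metric_space \<Rightarrow> 'b::metric_space"
  assumes cov: "covering_space C p S" and S: "simply_connected S" "locally path_connected S"
    and "a \<in> C"
  obtains g where "continuous_on S g" "g \<in> S \<rightarrow> C" "g (p a) = a" "\<And>y. y \<in> S \<Longrightarrow> p (g y) = y"
proof -
  obtain eC :: "'a \<Rightarrow> ('a \<Rightarrow>\<^sub>C real)" and iC and eS :: "'b \<Rightarrow> ('b \<Rightarrow>\<^sub>C real)"
    where hC: "homeomorphism (eC ` C) C iC eC"
      and eS: "homeomorphism S (eS ` S) eS (inv_into S eS)"
      and cov': "covering_space (eC ` C) (eS \<circ> p \<circ> iC) (eS ` S)"
    by (rule covering_space_bcontfun_model[OF cov])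
  have "S homeomorphic eS ` S"
    using eS homeomorphic_def by blast
  then have sc: "simply_connected (eS ` S)" and lpc: "locally path_connected (eS ` S)"
    using S homeomorphic_simply_connected homeomorphic_locally homeomorphic_path_connectedness
    by blast+
  have "iC (eC a) = a"
    using hC \<open>a \<in> C\<close> by (simp add: homeomorphism_def)
  obtain g' where g': "continuous_on (eS ` S) g'" "g' \<in> eS ` S \<rightarrow> eC ` C"
      "g' (eS (p a)) = eC a" "\<And>y. y \<in> eS ` S \<Longrightarrow> (eS \<circ> p \<circ> iC) (g' y) = id y"
  proof (rule covering_space_lift_strong[OF cov' _ _ sc lpc, of "eC a" "eS (p a)" id])
    show "eC a \<in> eC ` C"
      using \<open>a \<in> C\<close> by blast
    show "eS (p a) \<in> eS ` S"
      using \<open>a \<in> C\<close> covering_space_imp_surjective[OF cov] by blast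
    show "id (eS (p a)) = (eS \<circ> p \<circ> iC) (eC a)"
      using \<open>iC (eC a) = a\<close> by simp
  qed (auto intro: that)
  have gC: "iC (g' (eS y)) \<in> C" if "y \<in> S" for y
  proof -
    have "g' (eS y) \<in> eC ` C"
      using g'(2) that by auto
    then show ?thesis
      using hC unfolding homeomorphism_def by blast
  qed
  show ?thesis
  proof
    have "continuous_on S (g' \<circ> eS)"
      using eS g'(1) continuous_on_compose homeomorphism_def by blast
    moreover have "(g' \<circ> eS) ` S \<subseteq> eC ` C"
      using g'(2) by auto
    ultimately show "continuous_on S (iC \<circ> g' \<circ> eS)"
      using hC continuous_on_compose continuous_on_subset homeomorphism_def
      by (metis comp_assoc)
    show "iC \<circ> g' \<circ> eS \<in> S \<rightarrow> C"
      using gC by simp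
    show "(iC \<circ> g' \<circ> eS) (p a) = a"
      using g'(3) \<open>iC (eC a) = a\<close> by simp
    fix y assume "y \<in> S"
    have "p (iC (g' (eS y))) \<in> S"
      using gC[OF \<open>y \<in> S\<close>] covering_space_imp_surjective[OF cov] by blast
    moreover have "eS (p (iC (g' (eS y)))) = eS y"
      using g'(4)[of "eS y"] \<open>y \<in> S\<close> by simp
    moreover have "\<forall>x\<in>S. inv_into S eS (eS x) = x"
      using eS by (simp add: homeomorphism_def)
    ultimately show "p ((iC \<circ> g' \<circ> eS) y) = y"
      using \<open>y \<in> S\<close> by (metis comp_apply)
  qed
qed

lemma local_homeomorphismE:
  assumes "local_homeomorphism Z g S" "z \<in> Z"
  obtains U h where "z \<in> U" "openin (top_of_set Z) U" "openin (top_of_set S) (g ` U)"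
    "homeomorphism U (g ` U) g h"
  using assms unfolding local_homeomorphism_def by blast

lemma local_homeomorphism_imp_continuous_on:
  fixes Z :: "'a::t2_space set"
  assumes "local_homeomorphism Z g S"
  shows "continuous_on Z g"
proof (rule continuous_on_eq_continuous_within[THEN iffD2], intro ballI)
  fix z assume "z \<in> Z"
  then obtain U h where "z \<in> U" "openin (top_of_set Z) U" "openin (top_of_set S) (g ` U)"
      "homeomorphism U (g ` U) g h"
    by (rule local_homeomorphismE[OF assms])
  moreover obtain V where "open V" "U = Z \<inter> V"
    using \<open>openin (top_of_set Z) U\<close> by (auto simp: openin_open)
  ultimately have "at z within U = at z within Z"
    using at_within_nhd[of z V U Z] by auto
  moreover have "continuous (at z within U) g"
    using \<open>z \<in> U\<close> \<open>homeomorphism U (g ` U) g h\<close>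
    by (simp add: homeomorphism_def continuous_on_eq_continuous_within)
  ultimately show "continuous (at z within Z) g"
    by simp
qed

lemma covering_space_imp_local_homeomorphism:
  assumes "covering_space C p S"
  shows "local_homeomorphism C p S"
  unfolding local_homeomorphism_def
proof (intro conjI ballI)
  show "p ` C \<subseteq> S"
    using assms covering_space_imp_surjective by blast
  fix z assume "z \<in> C"
  then obtain T u q where "z \<in> T" "openin (top_of_set C) T" "openin (top_of_set S) u"
      "homeomorphism T u p q"
    using covering_space_local_homeomorphism[OF assms] by metis
  moreover have "p ` T = u"
    using \<open>homeomorphism T u p q\<close> by (simp add: homeomorphism_def)
  ultimately show "\<exists>U. z \<in> U \<and> openin (top_of_set C) U \<and> openin (top_of_set S) (p ` U) \<and>
                (\<exists>h. homeomorphism U (p ` U) p h)"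
    by auto
qed

lemma local_homeomorphism_lifts_agree_openin:
  assumes lh: "local_homeomorphism Z g S"
    and q: "continuous_on T q1" "continuous_on T q2" "q1 ` T \<subseteq> Z" "q2 ` T \<subseteq> Z"
    and lift: "\<And>t. t \<in> T \<Longrightarrow> g (q1 t) = g (q2 t)"
  shows "openin (top_of_set T) {t \<in> T. q1 t = q2 t}"
proof (subst openin_subopen, intro ballI)
  fix t0 assume "t0 \<in> {t \<in> T. q1 t = q2 t}"
  then have t0: "t0 \<in> T" "q1 t0 = q2 t0" "q1 t0 \<in> Z"
    using q(3) by auto
  obtain U h where U: "q1 t0 \<in> U" "openin (top_of_set Z) U" "openin (top_of_set S) (g ` U)"
      "homeomorphism U (g ` U) g h"
    by (rule local_homeomorphismE[OF lh t0(3)])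
  define N where "N = (T \<inter> q1 -` U) \<inter> (T \<inter> q2 -` U)"
  have "openin (top_of_set T) (T \<inter> q1 -` U)" "openin (top_of_set T) (T \<inter> q2 -` U)"
    using q(3,4) by (auto intro: continuous_openin_preimage[OF q(1) _ U(2)]
        continuous_openin_preimage[OF q(2) _ U(2)])
  then have "openin (top_of_set T) N"
    unfolding N_def by (rule openin_Int)
  moreover have "N \<subseteq> {t \<in> T. q1 t = q2 t}"
  proof
    fix u assume "u \<in> N"
    then have "u \<in> T" "q1 u \<in> U" "q2 u \<in> U"
      by (auto simp: N_def)
    moreover have "h (g v) = v" if "v \<in> U" for v
      using U(4) that by (simp add: homeomorphism_def)
    ultimately show "u \<in> {t \<in> T. q1 t = q2 t}"
      using lift by (metis (mono_tags, lifting) mem_Collect_eq)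
  qed
  moreover have "t0 \<in> N"
    using t0 U(1) by (simp add: N_def)
  ultimately show "\<exists>N. openin (top_of_set T) N \<and> t0 \<in> N \<and> N \<subseteq> {t \<in> T. q1 t = q2 t}"
    by blast
qed

lemma local_homeomorphism_lift_unique:
  fixes Z :: "'a::metric_space set"
  assumes lh: "local_homeomorphism Z g S" and "connected T"
    and q: "continuous_on T q1" "continuous_on T q2" "q1 ` T \<subseteq> Z" "q2 ` T \<subseteq> Z"
    and lift: "\<And>t. t \<in> T \<Longrightarrow> g (q1 t) = g (q2 t)"
    and a: "a \<in> T" "q1 a = q2 a" and "t \<in> T"
  shows "q1 t = q2 t"
proof -
  define E where "E = {t \<in> T. q1 t = q2 t}"
  have "closedin (top_of_set T) {t \<in> T. dist (q1 t) (q2 t) = 0}"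
    by (intro continuous_closedin_preimage_constant continuous_on_dist q)
  then have "closedin (top_of_set T) E"
    by (simp add: E_def)
  moreover have "openin (top_of_set T) E"
    unfolding E_def by (rule local_homeomorphism_lifts_agree_openin[OF lh q lift])
  ultimately have "E = {} \<or> E = T"
    by (intro connected_clopen[THEN iffD1, rule_format] \<open>connected T\<close> conjI)
  then show ?thesis
    using a \<open>t \<in> T\<close> unfolding E_def by blast
qed

lemma covering_space_component_homeomorphism:
  fixes p :: "'a::metric_space \<Rightarrow> 'b::metric_space"
  assumes cov: "covering_space C p S" and S: "simply_connected S" "locally path_connected S"
    and K: "K \<in> components C"
  shows "\<exists>g. homeomorphism K S p g"
proof -
  obtain a where a: "a \<in> C" "K = connected_component_set C a"
    using K by (rule componentsE)
  obtain g where g: "continuous_on S g" "g \<in> S \<rightarrow> C" "g (p a) = a" "\<And>y. y \<in> S \<Longrightarrow> p (g y) = y"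
    using covering_space_global_section[OF cov S a(1)] by blast
  have "p a \<in> S"
    using cov a covering_space_imp_surjective by blast
  have "connected (g ` S)"
    using connected_continuous_image[OF g(1)] path_connected_imp_connected
      simply_connected_imp_path_connected_metric[OF S(1)] by blast
  moreover have "a \<in> g ` S"
    using g(3) \<open>p a \<in> S\<close> by (metis image_eqI)
  moreover have "g ` S \<subseteq> C"
    using g(2) by blast
  ultimately have gK: "g ` S \<subseteq> K"
    using a(2) connected_component_maximal by metis
  have KC: "K \<subseteq> C" and "connected K"
    using K in_components_subset in_components_connected by blast+
  have pK: "continuous_on K p" "p ` K \<subseteq> S"
    using continuous_on_subset[OF covering_space_imp_continuous[OF cov] KC]
      covering_space_imp_surjective[OF cov] KC by blast+
  have "(g \<circ> p) y = id y" if "y \<in> K" for y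
  proof (rule local_homeomorphism_lift_unique
      [OF covering_space_imp_local_homeomorphism[OF cov] \<open>connected K\<close>, of "g \<circ> p" id])
    show "continuous_on K (g \<circ> p)"
      using continuous_on_compose[OF pK(1) continuous_on_subset[OF g(1) pK(2)]] .
    show "(g \<circ> p) ` K \<subseteq> C" "id ` K \<subseteq> C"
      using pK g(2) KC by auto
    show "p ((g \<circ> p) t) = p (id t)" if "t \<in> K" for t
      using pK g(4) that by auto
    show "a \<in> K" "(g \<circ> p) a = id a"
      using a g(3) by auto
  qed (use that in auto)
  then have gp: "g (p y) = y" if "y \<in> K" for y
    using that by simp
  have "homeomorphism K S p g"
    unfolding homeomorphism_def
  proof (intro conjI ballI)
    show "p ` K = S"
    proof
      show "S \<subseteq> p ` K"
        using gK g(4) by (metis image_eqI image_subset_iff subsetI)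
    qed (rule pK(2))
    show "g ` S = K"
    proof
      show "K \<subseteq> g ` S"
        using pK(2) gp by (metis image_eqI image_subset_iff subsetI)
    qed (rule gK)
  qed (simp_all add: pK(1) g(1) g(4) gp)
  then show ?thesis
    by blast
qed

lemma local_homeomorphism_section_image_open:
  fixes Z :: "'a::t2_space set"
  assumes lh: "local_homeomorphism Z g S" and U: "openin (top_of_set S) U"
    and s: "continuous_on U s" "s ` U \<subseteq> Z" "\<And>x. x \<in> U \<Longrightarrow> g (s x) = x"
  shows "openin (top_of_set Z) (s ` U)"
proof (subst openin_subopen, intro ballI)
  fix y assume "y \<in> s ` U"
  then have "y \<in> Z"
    using s(2) by blast
  then obtain V h where V: "y \<in> V" "openin (top_of_set Z) V" "openin (top_of_set S) (g ` V)"
      "homeomorphism V (g ` V) g h"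
    by (rule local_homeomorphismE[OF lh])
  have "openin (top_of_set U) (U \<inter> s -` V)"
    using continuous_openin_preimage[OF s(1) _ V(2)] s(2) by blast
  then have "openin (top_of_set S) (U \<inter> s -` V)"
    using U openin_trans by blast
  moreover have "continuous_on V g"
    using V(4) by (simp add: homeomorphism_def)
  moreover have "g \<in> V \<rightarrow> S"
    using openin_imp_subset[OF V(3)] by blast
  ultimately have "openin (top_of_set V) (V \<inter> g -` (U \<inter> s -` V))"
    using continuous_openin_preimage by blast
  then have N: "openin (top_of_set Z) (V \<inter> g -` (U \<inter> s -` V))"
    using V(2) openin_trans by blast
  have "V \<inter> g -` (U \<inter> s -` V) \<subseteq> s ` U"
  proof
    fix y' assume y': "y' \<in> V \<inter> g -` (U \<inter> s -` V)"
    then have "h (g (s (g y'))) = s (g y')" "h (g y') = y'"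
      using V(4) by (auto simp: homeomorphism_def)
    then have "s (g y') = y'"
      using s(3) y' by auto
    then show "y' \<in> s ` U"
      using y' by (metis IntD2 Int_iff image_eqI vimageE)
  qed
  moreover have "y \<in> V \<inter> g -` (U \<inter> s -` V)"
    using \<open>y \<in> s ` U\<close> V(1) s(3) by auto
  ultimately show "\<exists>N. openin (top_of_set Z) N \<and> y \<in> N \<and> N \<subseteq> s ` U"
    using N by blast
qed

lemma locally_P_contractibleE:
  assumes "locally_P_contractible P"
  obtains U H where "open U" "a \<in> U" "continuous_on (U \<times> {0..1}) H" "H ` (U \<times> {0..1}) \<subseteq> U"
    "\<And>t. t \<in> {0..1} \<Longrightarrow> H (a, t) = a"
    "\<And>x. x \<in> U \<Longrightarrow> H (x, 0) = a" "\<And>x. x \<in> U \<Longrightarrow> H (x, 1) = x"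
    "\<And>x. x \<in> U \<Longrightarrow> in_paths P (\<lambda>t. H (x, t))"
proof -
  obtain U H where U: "open U" "a \<in> U" "continuous_on (U \<times> {0..1}) H" "H ` (U \<times> {0..1}) \<subseteq> U"
      "\<forall>t\<in>{0..1}. H (a, t) = a" "\<forall>x\<in>U. H (x, 0) = a \<and> H (x, 1) = x"
      "\<forall>x\<in>U. in_paths P (\<lambda>t. H (x, t))"
    using assms unfolding locally_P_contractible_def by (elim allE[of _ a] exE conjE)
  show ?thesis
    by (rule that[OF U(1-4)]) (use U(5-7) in auto)
qed

lemma locally_P_contractible_imp_locally_path_connected:
  fixes P :: "(real \<Rightarrow> 'a::metric_space) set"
  assumes "locally_P_contractible P"
  shows "locally path_connected (UNIV :: 'a set)"
  unfolding locally_path_connected_im_kleinen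
proof (intro allI impI)
  fix W and x0 :: 'a
  assume "openin (top_of_set UNIV) W \<and> x0 \<in> W"
  then have W: "open W" "x0 \<in> W"
    by auto
  obtain U H where U: "open U" "x0 \<in> U" "continuous_on (U \<times> {0..1}) H" "H ` (U \<times> {0..1}) \<subseteq> U"
      "\<And>t. t \<in> {0..1} \<Longrightarrow> H (x0, t) = x0"
      "\<And>x. x \<in> U \<Longrightarrow> H (x, 0) = x0" "\<And>x. x \<in> U \<Longrightarrow> H (x, 1) = x"
      "\<And>x. x \<in> U \<Longrightarrow> in_paths P (\<lambda>t. H (x, t))"
    by (rule locally_P_contractibleE[OF assms, where a = x0]) (rule that)
  obtain Q where Q: "open Q" "(U \<times> {0..1}) \<inter> H -` W = (U \<times> {0..1}) \<inter> Q"
    using continuous_openin_preimage_gen[OF U(3) W(1)] unfolding openin_open by blast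
  have "{x0} \<times> {0..1} \<subseteq> Q"
    using Q(2) U(2,5) W(2) by auto
  obtain X0 where X0: "x0 \<in> X0" "open X0" "X0 \<times> {0..1} \<subseteq> Q"
    using Elementary_Topology.tube_lemma[OF compact_Icc Q(1) \<open>{x0} \<times> {0..1} \<subseteq> Q\<close>] by auto
  have "\<exists>p. path p \<and> path_image p \<subseteq> W \<and> pathstart p = x0 \<and> pathfinish p = y"
    if y: "y \<in> X0 \<inter> U" for y
  proof (intro exI conjI)
    show "path (\<lambda>t. H (y, t))"
      unfolding path_def
      by (rule continuous_on_compose2[OF U(3)]) (use y in \<open>auto intro!: continuous_intros\<close>)
    show "path_image (\<lambda>t. H (y, t)) \<subseteq> W"
      using Q(2) X0(3) y unfolding path_image_def by auto
    show "pathstart (\<lambda>t. H (y, t)) = x0" "pathfinish (\<lambda>t. H (y, t)) = y"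
      using U(6,7) y unfolding pathstart_def pathfinish_def by auto
  qed
  moreover have "x0 \<in> X0 \<inter> U \<inter> W" "open (X0 \<inter> U \<inter> W)"
    using X0 U W by auto
  ultimately show "\<exists>V. openin (top_of_set UNIV) V \<and> x0 \<in> V \<and> V \<subseteq> W \<and>
          (\<forall>y. y \<in> V \<longrightarrow> (\<exists>p. path p \<and> path_image p \<subseteq> W \<and> pathstart p = x0 \<and> pathfinish p = y))"
    by (intro exI[of _ "X0 \<inter> U \<inter> W"]) auto
qed

section \<open>Lifting paths\<close>

locale continuable_local_homeomorphism =
  fixes Z :: "'a::metric_space set" and \<pi> :: "'a \<Rightarrow> 'x::metric_space"
    and P :: "(real \<Rightarrow> 'x) set"
  assumes paths: "\<And>p. p \<in> P \<Longrightarrow> path p"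
    and connected_by_P: "P_connected P"
    and contractible_by_P: "locally_P_contractible P"
    and local_homeo: "local_homeomorphism Z \<pi> UNIV"
    and continuation: "\<And>p. p \<in> P \<Longrightarrow> continuation_property Z \<pi> p"
begin

definition is_lift :: "real set \<Rightarrow> (real \<Rightarrow> 'x) \<Rightarrow> (real \<Rightarrow> 'a) \<Rightarrow> bool" where
  "is_lift I p q \<longleftrightarrow> continuous_on I q \<and> q ` I \<subseteq> Z \<and> (\<forall>t\<in>I. \<pi> (q t) = p t)"

lemma chart:
  assumes "z \<in> Z"
  obtains U V h where "z \<in> U" "open V" "U = Z \<inter> V" "open (\<pi> ` U)" "homeomorphism U (\<pi> ` U) \<pi> h"
proof -
  obtain U h where U: "z \<in> U" "openin (top_of_set Z) U" "openin (top_of_set UNIV) (\<pi> ` U)"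
      "homeomorphism U (\<pi> ` U) \<pi> h"
    by (rule local_homeomorphismE[OF local_homeo assms])
  obtain V where "open V" "U = Z \<inter> V"
    using U(2) by (auto simp: openin_open)
  show ?thesis
    by (rule that[OF U(1) \<open>open V\<close> \<open>U = Z \<inter> V\<close> _ U(4)]) (use U(3) in simp)
qed

lemma is_lift_unique:
  assumes "is_lift I p q1" "is_lift I p q2" "connected I" "a \<in> I" "q1 a = q2 a" "t \<in> I"
  shows "q1 t = q2 t"
  using local_homeomorphism_lift_unique[OF local_homeo \<open>connected I\<close>, of q1 q2 a t] assms
  unfolding is_lift_def by auto

lemma is_lift_subset: "is_lift I p q \<Longrightarrow> J \<subseteq> I \<Longrightarrow> is_lift J p q"
  unfolding is_lift_def by (auto intro: continuous_on_subset)

lemma is_lift_glue_chart: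
  assumes q: "is_lift {0..a} p q" and ab: "0 \<le> a" "a \<le> b"
    and U: "U \<subseteq> Z" "homeomorphism U (\<pi> ` U) \<pi> h" "q a \<in> U"
    and p: "continuous_on {a..b} p" "p ` {a..b} \<subseteq> \<pi> ` U"
  shows "is_lift {0..b} p (\<lambda>t. if t \<le> a then q t else h (p t))"
proof -
  have h: "h y \<in> U" "\<pi> (h y) = y" if "y \<in> \<pi> ` U" for y
    using U(2) that by (auto simp: homeomorphism_def)
  have "continuous_on {0..b} (\<lambda>t. if id t \<le> a then q t else h (p t))"
  proof (rule continuous_on_cases_le)
    show "continuous_on {t \<in> {0..b}. id t \<le> a} q"
      using q unfolding is_lift_def by (rule continuous_on_subset[OF conjunct1]) auto
    have "continuous_on (\<pi> ` U) h"
      using U(2) by (simp add: homeomorphism_def)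
    then show "continuous_on {t \<in> {0..b}. a \<le> id t} (\<lambda>t. h (p t))"
      by (rule continuous_on_compose2) (use p in \<open>auto intro: continuous_on_subset\<close>)
    show "continuous_on {0..b} id"
      by (simp add: id_def continuous_on_id)
    fix t assume "t \<in> {0..b}" "id t = a"
    moreover have "\<pi> (q a) = p a"
      using q ab by (simp add: is_lift_def)
    ultimately show "q t = h (p t)"
      using U(2,3) by (auto simp: homeomorphism_def)
  qed
  moreover have "(\<lambda>t. if t \<le> a then q t else h (p t)) ` {0..b} \<subseteq> Z"
    using q h p U(1) unfolding is_lift_def by (auto simp: subset_iff image_subset_iff)
  moreover have "\<forall>t\<in>{0..b}. \<pi> (if t \<le> a then q t else h (p t)) = p t"
    using q h p unfolding is_lift_def by (auto simp: image_subset_iff)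
  ultimately show ?thesis
    unfolding is_lift_def by simp
qed

lemma is_lift_extend_right:
  assumes p: "path p" and q: "is_lift {0..a} p q" and a: "0 \<le> a" "a < 1"
  obtains b q' where "a < b" "b \<le> 1" "is_lift {0..b} p q'" "q' 0 = q 0"
proof -
  have "q a \<in> Z" "\<pi> (q a) = p a"
    using q a by (auto simp: is_lift_def)
  then obtain U V h where U: "q a \<in> U" "U = Z \<inter> V" "open (\<pi> ` U)" "homeomorphism U (\<pi> ` U) \<pi> h"
    by (metis chart)
  have "p a \<in> \<pi> ` U"
    using U(1) \<open>\<pi> (q a) = p a\<close> by (metis image_eqI)
  moreover have "a \<in> {0..1}"
    using a by simp
  ultimately obtain d where d: "d > 0" "\<And>t. t \<in> {0..1} \<Longrightarrow> dist t a < d \<Longrightarrow> p t \<in> \<pi> ` U"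
    using continuous_on_ball_into_open[OF p[unfolded path_def] _ U(3)] by blast
  define b where "b = min 1 (a + d / 2)"
  have b: "a < b" "b \<le> 1"
    using a d(1) by (auto simp: b_def)
  have "p ` {a..b} \<subseteq> \<pi> ` U"
    using d(2) a b by (auto simp: b_def dist_real_def)
  moreover have "continuous_on {a..b} p"
    using p a b unfolding path_def by (auto intro: continuous_on_subset)
  ultimately have "is_lift {0..b} p (\<lambda>t. if t \<le> a then q t else h (p t))"
    using is_lift_glue_chart[OF q a(1) _ _ U(4) U(1)] b U(2) by auto
  then show ?thesis
    by (rule that[OF b]) (use a in simp)
qed

lemma is_lift_half_open_limit:
  assumes p: "p \<in> P" and s: "0 < s" "s \<le> 1" and q: "is_lift {0..<s} p q"
  obtains tn zs where "\<And>n. tn n \<in> {0..<s}" "tn \<longlonglongrightarrow> s" "zs \<in> Z" "(q \<circ> tn) \<longlonglongrightarrow> zs"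
    "\<pi> zs = p s"
proof -
  have "\<exists>tn. (\<forall>n. tn n \<in> {0..<s}) \<and> tn \<longlonglongrightarrow> s \<and> (\<exists>z\<in>Z. (q \<circ> tn) \<longlonglongrightarrow> z)"
    using continuation[OF p] s q unfolding continuation_property_def is_lift_def by auto
  then obtain tn zs where tn: "\<And>n. tn n \<in> {0..<s}" "tn \<longlonglongrightarrow> s"
    and zs: "zs \<in> Z" "(q \<circ> tn) \<longlonglongrightarrow> zs"
    by blast
  have "(\<lambda>n. \<pi> (q (tn n))) \<longlonglongrightarrow> \<pi> zs"
    using continuous_on_tendsto_compose[OF local_homeomorphism_imp_continuous_on[OF local_homeo]
        zs(2) zs(1)] tn(1) q by (simp add: is_lift_def image_subset_iff)
  moreover have "(\<lambda>n. p (tn n)) \<longlonglongrightarrow> p s"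
  proof (rule continuous_on_tendsto_compose[OF _ tn(2)])
    show "continuous_on {0..1} p"
      using paths[OF p] by (simp add: path_def)
    have "tn n \<in> {0..1}" for n
      using tn(1)[of n] s by auto
    then show "\<forall>\<^sub>F n in sequentially. tn n \<in> {0..1}"
      by (intro always_eventually allI)
  qed (use s in auto)
  moreover have "\<pi> (q (tn n)) = p (tn n)" for n
    using q tn(1) by (simp add: is_lift_def)
  ultimately have "\<pi> zs = p s"
    using LIMSEQ_unique by force
  then show ?thesis
    by (rule that[OF tn zs])
qed

lemma is_lift_close_half_open:
  assumes p: "p \<in> P" and s: "0 < s" "s \<le> 1" and q: "is_lift {0..<s} p q"
  obtains q' where "is_lift {0..s} p q'" "q' 0 = q 0"
proof -
  have pc: "continuous_on {0..1} p"
    using paths[OF p] by (simp add: path_def)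
  obtain tn zs where tn: "\<And>n. tn n \<in> {0..<s}" "tn \<longlonglongrightarrow> s"
    and zs: "zs \<in> Z" "(q \<circ> tn) \<longlonglongrightarrow> zs" "\<pi> zs = p s"
    by (rule is_lift_half_open_limit[OF p s q]) (rule that)
  obtain U V h where U: "zs \<in> U" "open V" "U = Z \<inter> V" "open (\<pi> ` U)" "homeomorphism U (\<pi> ` U) \<pi> h"
    by (rule chart[OF zs(1)])
  have "p s \<in> \<pi> ` U"
    using U(1) zs(3) by (metis image_eqI)
  moreover have "s \<in> {0..1}"
    using s by simp
  ultimately obtain d where d: "d > 0" "\<And>t. t \<in> {0..1} \<Longrightarrow> dist t s < d \<Longrightarrow> p t \<in> \<pi> ` U"
    using continuous_on_ball_into_open[OF pc _ U(4)] by blast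
  have "eventually (\<lambda>n. q (tn n) \<in> V) sequentially"
    using topological_tendstoD[OF zs(2) U(2)] U(1,3) by auto
  moreover have "eventually (\<lambda>n. dist (tn n) s < d) sequentially"
    using tn(2) d(1) by (rule tendstoD)
  ultimately obtain n where n: "q (tn n) \<in> V" "dist (tn n) s < d"
    using eventually_happens'[OF sequentially_bot] eventually_conj by blast
  define t0 where "t0 = tn n"
  have t0: "0 \<le> t0" "t0 < s"
    using tn(1) by (auto simp: t0_def)
  have "q t0 \<in> U"
    using n(1) q t0 U(3) unfolding t0_def is_lift_def by auto
  moreover have "p ` {t0..s} \<subseteq> \<pi> ` U"
    using d(2) n(2) t0 s unfolding t0_def by (auto simp: dist_real_def)
  moreover have "continuous_on {t0..s} p"
    using pc t0 s by (auto intro: continuous_on_subset)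
  moreover have "is_lift {0..t0} p q"
    by (rule is_lift_subset[OF q]) (use t0 in auto)
  ultimately have "is_lift {0..s} p (\<lambda>t. if t \<le> t0 then q t else h (p t))"
    using is_lift_glue_chart[OF _ t0(1) _ _ U(5)] t0 U(3) by auto
  then show ?thesis
    by (rule that) (use t0 in simp)
qed

lemma is_lift_half_open_of_lifts:
  assumes "0 < s" and lifts: "\<And>t. 0 \<le> t \<Longrightarrow> t < s \<Longrightarrow> \<exists>b q. t < b \<and> is_lift {0..b} p q \<and> q 0 = z"
  obtains q where "is_lift {0..<s} p q" "q 0 = z"
proof -
  define B where "B t = (SOME bq. t < fst bq \<and> is_lift {0..fst bq} p (snd bq) \<and> snd bq 0 = z)" for t
  have B_conj: "t < fst (B t) \<and> is_lift {0..fst (B t)} p (snd (B t)) \<and> snd (B t) 0 = z"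
    if t: "0 \<le> t" "t < s" for t
  proof -
    obtain b q where "t < b" "is_lift {0..b} p q" "q 0 = z"
      using lifts[OF t] by blast
    then have "\<exists>bq. t < fst bq \<and> is_lift {0..fst bq} p (snd bq) \<and> snd bq 0 = z"
      by (intro exI[of _ "(b, q)"]) simp
    then show ?thesis
      unfolding B_def by (rule someI_ex)
  qed
  then have B: "t < fst (B t)" "is_lift {0..fst (B t)} p (snd (B t))" "snd (B t) 0 = z"
    if "0 \<le> t" "t < s" for t
    using that by blast+
  define qs where "qs t = snd (B t) t" for t
  have qs_eq: "qs t = q t" if "0 \<le> t" "t < s" "t \<le> b" "is_lift {0..b} p q" "q 0 = z" for t b q
  proof -
    have "is_lift {0..min b (fst (B t))} p (snd (B t))"
      by (rule is_lift_subset[OF B(2)[OF that(1,2)]]) auto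
    moreover have "is_lift {0..min b (fst (B t))} p q"
      by (rule is_lift_subset[OF that(4)]) auto
    ultimately show ?thesis
      unfolding qs_def
      by (rule is_lift_unique[where a = 0]) (use B[OF that(1,2)] that in auto)
  qed
  have "continuous (at t within {0..<s}) qs" if t: "t \<in> {0..<s}" for t
  proof -
    define b where "b = fst (B t)"
    have b: "t < b" "is_lift {0..b} p (snd (B t))" "snd (B t) 0 = z"
      using B t unfolding b_def by simp_all
    have "continuous_on {0..b} (snd (B t))"
      using b(2) by (simp add: is_lift_def)
    moreover have "(\<lambda>u. min u b) ` {0..<s} \<subseteq> {0..b}"
      using b(1) t by auto
    ultimately have "continuous_on {0..<s} (snd (B t) \<circ> (\<lambda>u. min u b))"
      by (intro continuous_on_compose continuous_intros) (rule continuous_on_subset)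
    then have "continuous (at t within {0..<s}) (snd (B t) \<circ> (\<lambda>u. min u b))"
      using t continuous_on_eq_continuous_within by blast
    then show ?thesis
    proof (rule continuous_transform_within[where \<delta> = "b - t"])
      fix u assume "u \<in> {0..<s}" "dist u t < b - t"
      then show "(snd (B t) \<circ> (\<lambda>u. min u b)) u = qs u"
        using qs_eq[of u b "snd (B t)"] b by (auto simp: dist_real_def)
    qed (use b t in auto)
  qed
  moreover have "qs t \<in> Z" "\<pi> (qs t) = p t" if "t \<in> {0..<s}" for t
    using B[of t] that unfolding qs_def is_lift_def by auto
  ultimately have "is_lift {0..<s} p qs"
    unfolding is_lift_def by (auto simp: continuous_on_eq_continuous_within)
  moreover have "qs 0 = z"
    using B[of 0] \<open>0 < s\<close> by (simp add: qs_def)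
  ultimately show ?thesis
    by (rule that)
qed

lemma lift_path_exists:
  assumes p: "p \<in> P" and z: "z \<in> Z" "\<pi> z = p 0"
  obtains q where "is_lift {0..1} p q" "q 0 = z"
proof -
  define A where "A = {b \<in> {0..1}. \<exists>q. is_lift {0..b} p q \<and> q 0 = z}"
  have "is_lift {0..0} p (\<lambda>_. z)"
    using z by (simp add: is_lift_def)
  then have "0 \<in> A"
    unfolding A_def by auto
  have bdd: "bdd_above A"
    unfolding A_def by (auto intro: bdd_aboveI[of _ 1])
  define s where "s = Sup A"
  have le_s: "b \<le> s" if "b \<in> A" for b
    unfolding s_def using that bdd by (rule cSup_upper)
  have "s \<le> 1"
    unfolding s_def
  proof (rule cSup_least)
    show "A \<noteq> {}"
      using \<open>0 \<in> A\<close> by blast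
  qed (auto simp: A_def)
  then have s: "0 \<le> s" "s \<le> 1"
    using le_s[OF \<open>0 \<in> A\<close>] by auto
  have "s \<in> A"
  proof (cases "s = 0")
    case False
    then have "0 < s"
      using s by simp
    have below: "\<exists>b q. t < b \<and> is_lift {0..b} p q \<and> q 0 = z" if "0 \<le> t" "t < s" for t
    proof -
      have "\<exists>b\<in>A. t < b"
        using less_cSup_iff[of A t] \<open>0 \<in> A\<close> bdd that(2) unfolding s_def by blast
      then show ?thesis
        by (auto simp: A_def)
    qed
    obtain qs where qs: "is_lift {0..<s} p qs" "qs 0 = z"
      by (rule is_lift_half_open_of_lifts[OF \<open>0 < s\<close> below])
    obtain q where "is_lift {0..s} p q" "q 0 = qs 0"
      by (rule is_lift_close_half_open[OF p \<open>0 < s\<close> s(2) qs(1)])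
    then show ?thesis
      using s qs(2) by (auto simp: A_def)
  qed (use \<open>0 \<in> A\<close> in simp)
  have "s = 1"
  proof (rule ccontr)
    assume "s \<noteq> 1"
    then have "s < 1"
      using s by simp
    obtain q where q: "is_lift {0..s} p q" "q 0 = z"
      using \<open>s \<in> A\<close> by (auto simp: A_def)
    obtain b q' where "s < b" "b \<le> 1" "is_lift {0..b} p q'" "q' 0 = q 0"
      by (rule is_lift_extend_right[OF paths[OF p] q(1) s(1) \<open>s < 1\<close>])
    then have "b \<in> A"
      using s q(2) by (auto simp: A_def)
    then show False
      using le_s \<open>s < b\<close> by fastforce
  qed
  then show ?thesis
    using \<open>s \<in> A\<close> that by (auto simp: A_def)
qed

definition path_lift :: "'a \<Rightarrow> (real \<Rightarrow> 'x) \<Rightarrow> real \<Rightarrow> 'a" where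
  "path_lift z g = (SOME q. is_lift {0..1} g q \<and> q 0 = z)"

lemma path_lift_is_lift:
  assumes "in_paths P g" "z \<in> Z" "\<pi> z = g 0"
  shows "is_lift {0..1} g (path_lift z g)" "path_lift z g 0 = z"
proof -
  obtain p where p: "p \<in> P" "\<And>t. t \<in> {0..1} \<Longrightarrow> p t = g t"
    using assms(1) unfolding in_paths_def by blast
  have "\<pi> z = p 0"
    using assms(3) p(2)[of 0] by simp
  then obtain q where "is_lift {0..1} p q" "q 0 = z"
    by (rule lift_path_exists[OF p(1) assms(2)])
  then have "is_lift {0..1} g q \<and> q 0 = z"
    using p(2) by (simp add: is_lift_def)
  then have "is_lift {0..1} g (path_lift z g) \<and> path_lift z g 0 = z"
    unfolding path_lift_def by (rule someI[where P = "\<lambda>q. is_lift {0..1} g q \<and> q 0 = z"])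
  then show "is_lift {0..1} g (path_lift z g)" "path_lift z g 0 = z"
    by simp_all
qed

lemma in_paths_reversepath:
  assumes "in_paths P g"
  shows "in_paths P (reversepath g)"
proof -
  obtain p where p: "p \<in> P" "\<forall>t\<in>{0..1}. p t = g t"
    using assms unfolding in_paths_def by blast
  then obtain p' where p': "p' \<in> P" "\<forall>t\<in>{0..1}. p' t = reversepath p t"
    using connected_by_P unfolding P_connected_def in_paths_def by blast
  show ?thesis
    unfolding in_paths_def using p p' by (intro bexI[of _ p']) (auto simp: reversepath_def)
qed

lemma projection_surjective:
  assumes "Z \<noteq> {}"
  shows "\<pi> ` Z = UNIV"
proof -
  obtain z0 where z0: "z0 \<in> Z"
    using assms by blast
  have "x \<in> \<pi> ` Z" for x
  proof -
    obtain p where p: "p \<in> P" "pathstart p = \<pi> z0" "pathfinish p = x"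
      using connected_by_P unfolding P_connected_def by blast
    then have "\<pi> z0 = p 0"
      by (simp add: pathstart_def)
    then obtain q where "is_lift {0..1} p q"
      by (rule lift_path_exists[OF p(1) z0])
    then have "q 1 \<in> Z" "\<pi> (q 1) = x"
      using p(3) by (auto simp: is_lift_def pathfinish_def)
    then show ?thesis
      by (metis image_eqI)
  qed
  then show ?thesis
    by blast
qed

lemma is_lift_eq_chart:
  assumes q: "is_lift J p q" "connected J" "a \<in> J" "q a \<in> U"
    and U: "U \<subseteq> Z" "homeomorphism U (\<pi> ` U) \<pi> h"
    and p: "continuous_on J p" "p ` J \<subseteq> \<pi> ` U" and "b \<in> J"
  shows "q b = h (p b)"
proof (rule is_lift_unique[OF q(1) _ q(2,3) _ \<open>b \<in> J\<close>])
  have h: "continuous_on (\<pi> ` U) h" "\<And>y. y \<in> \<pi> ` U \<Longrightarrow> h y \<in> U \<and> \<pi> (h y) = y"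
    using U(2) by (auto simp: homeomorphism_def)
  show "is_lift J p (\<lambda>t. h (p t))"
    unfolding is_lift_def using continuous_on_compose2[OF h(1) p] h(2) p(2) U(1)
    by (auto simp: image_subset_iff subset_iff)
  have "\<pi> (q a) = p a"
    using q(1,3) by (simp add: is_lift_def)
  then show "q a = h (p a)"
    using U(2) q(4) by (auto simp: homeomorphism_def)
qed

lemma lift_chart_neighbourhood:
  fixes H :: "'b::metric_space \<times> real \<Rightarrow> 'x"
  assumes H: "continuous_on (U \<times> {0..1}) H" and L: "is_lift {0..1} (\<lambda>t. H (x1, t)) L1"
    and x1: "x1 \<in> U" and t1: "t1 \<in> {0..1}"
  obtains V W h d J where "V = Z \<inter> W" "open W" "homeomorphism V (\<pi> ` V) \<pi> h" "d > 0"
    "connected J" "J \<subseteq> {0..1}" "t1 \<in> J" "openin (top_of_set {0..1}) J"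
    "\<And>t. t \<in> J \<Longrightarrow> L1 t \<in> W"
    "\<And>x t. x \<in> U \<Longrightarrow> dist x x1 < d \<Longrightarrow> t \<in> J \<Longrightarrow> H (x, t) \<in> \<pi> ` V"
proof -
  have "L1 t1 \<in> Z" "\<pi> (L1 t1) = H (x1, t1)"
    using L t1 by (auto simp: is_lift_def)
  then obtain V W h where V: "L1 t1 \<in> V" "open W" "V = Z \<inter> W" "open (\<pi> ` V)"
      "homeomorphism V (\<pi> ` V) \<pi> h"
    by (metis chart)
  have "H (x1, t1) \<in> \<pi> ` V"
    using V(1) \<open>\<pi> (L1 t1) = H (x1, t1)\<close> by (metis image_eqI)
  then obtain d1 where d1: "d1 > 0"
      "\<And>y. y \<in> U \<times> {0..1} \<Longrightarrow> dist y (x1, t1) < d1 \<Longrightarrow> H y \<in> \<pi> ` V"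
    using continuous_on_ball_into_open[OF H _ V(4)] x1 t1 by blast
  obtain d2 where d2: "d2 > 0" "\<And>t. t \<in> {0..1} \<Longrightarrow> dist t t1 < d2 \<Longrightarrow> L1 t \<in> W"
    using continuous_on_ball_into_open[OF conjunct1[OF L[unfolded is_lift_def]] t1 V(2)] V(1,3)
    by blast
  define d where "d = d1 / 2"
  define J where "J = {0..1} \<inter> ball t1 (min d d2)"
  have J: "connected J" "J \<subseteq> {0..1}" "t1 \<in> J" "openin (top_of_set {0..1}) J"
    using t1 d1(1) d2(1) unfolding J_def d_def
    by (auto intro: convex_connected convex_Int convex_ball simp: is_interval_convex openin_open_Int)
  have LW: "L1 t \<in> W" if "t \<in> J" for t
    using d2(2)[of t] that by (auto simp: J_def dist_commute)
  have HV: "H (x, t) \<in> \<pi> ` V" if "x \<in> U" "dist x x1 < d" "t \<in> J" for x t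
    using d1(2)[of "(x, t)"] dist_Pair_lt[of x x1 d1 t t1] that
    by (auto simp: J_def d_def dist_commute)
  have "d > 0"
    using d1(1) by (simp add: d_def)
  show ?thesis
    by (rule that[OF V(3,2,5) \<open>d > 0\<close> J LW HV])
qed

lemma lift_continuous_in_parameter_step:
  fixes H :: "'b::metric_space \<times> real \<Rightarrow> 'x"
  assumes U: "open U" and H: "continuous_on (U \<times> {0..1}) H"
    and L: "\<And>x. x \<in> U \<Longrightarrow> is_lift {0..1} (\<lambda>t. H (x, t)) (L x)"
    and x1: "x1 \<in> U" and t1: "t1 \<in> {0..1}"
  shows "\<exists>J. openin (top_of_set {0..1}) J \<and> t1 \<in> J \<and>
           (\<forall>a\<in>J. \<forall>b\<in>J. isCont (\<lambda>x. L x a) x1 \<longrightarrow> isCont (\<lambda>x. L x b) x1)"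
proof -
  obtain V W h d J where V: "V = Z \<inter> W" "open W" "homeomorphism V (\<pi> ` V) \<pi> h" and "d > 0"
      and J: "connected J" "J \<subseteq> {0..1}" "t1 \<in> J" "openin (top_of_set {0..1}) J"
      and LW: "\<And>t. t \<in> J \<Longrightarrow> L x1 t \<in> W"
      and HV: "\<And>x t. x \<in> U \<Longrightarrow> dist x x1 < d \<Longrightarrow> t \<in> J \<Longrightarrow> H (x, t) \<in> \<pi> ` V"
    by (rule lift_chart_neighbourhood[OF H L[OF x1] x1 t1]) (rule that)
  have "isCont (\<lambda>x. L x b) x1" if a: "a \<in> J" "isCont (\<lambda>x. L x a) x1" and "b \<in> J" for a b
  proof -
    have "\<exists>N. open N \<and> x1 \<in> N \<and> (\<forall>x\<in>N. L x a \<in> W)"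
      using a LW V(2) unfolding continuous_at_open by blast
    then obtain N where N: "open N" "x1 \<in> N" "\<And>x. x \<in> N \<Longrightarrow> L x a \<in> W"
      by blast
    define M where "M = U \<inter> N \<inter> ball x1 d"
    have M: "open M" "x1 \<in> M"
      using U N x1 \<open>d > 0\<close> by (auto simp: M_def)
    \<comment> \<open>near \<open>x1\<close> the lifts agree with the chart inverse at \<open>a\<close>, hence on all of \<open>J\<close>\<close>
    have "L x b = h (H (x, b))" if "x \<in> M" for x
    proof (rule is_lift_eq_chart[where p = "\<lambda>t. H (x, t)"])
      have "x \<in> U"
        using that by (simp add: M_def)
      then show "is_lift J (\<lambda>t. H (x, t)) (L x)"
        using L J(2) is_lift_subset by blast
      show "L x a \<in> V"
        using N(3) that L[OF \<open>x \<in> U\<close>] a(1) J(2) V(1) by (auto simp: M_def is_lift_def)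
      show "continuous_on J (\<lambda>t. H (x, t))"
        by (rule continuous_on_compose2[OF H]) (use \<open>x \<in> U\<close> J(2) in \<open>auto intro!: continuous_intros\<close>)
      show "(\<lambda>t. H (x, t)) ` J \<subseteq> \<pi> ` V"
        using HV \<open>x \<in> U\<close> that by (auto simp: M_def dist_commute)
    qed (use J a(1) \<open>b \<in> J\<close> V(1,3) in auto)
    moreover have cont: "isCont (\<lambda>x. h (H (x, b))) x1"
    proof -
      have "continuous_on (\<pi> ` V) h"
        using V(3) by (simp add: homeomorphism_def)
      moreover have "continuous_on M (\<lambda>x. H (x, b))"
        by (rule continuous_on_compose2[OF H]) (use \<open>b \<in> J\<close> J(2) in \<open>auto simp: M_def intro!: continuous_intros\<close>)
      moreover have "(\<lambda>x. H (x, b)) ` M \<subseteq> \<pi> ` V"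
        using HV \<open>b \<in> J\<close> by (auto simp: M_def dist_commute)
      ultimately have "continuous_on M (\<lambda>x. h (H (x, b)))"
        by (rule continuous_on_compose2)
      then show ?thesis
        using M continuous_on_eq_continuous_at by blast
    qed
    ultimately have "eventually (\<lambda>x. L x b = h (H (x, b))) (nhds x1)"
      unfolding eventually_nhds using M by blast
    then show ?thesis
      using cont by (simp add: isCont_cong)
  qed
  then show ?thesis
    using J by blast
qed

lemma lift_continuous_in_parameter:
  fixes H :: "'b::metric_space \<times> real \<Rightarrow> 'x"
  assumes U: "open U" and H: "continuous_on (U \<times> {0..1}) H"
    and L: "\<And>x. x \<in> U \<Longrightarrow> is_lift {0..1} (\<lambda>t. H (x, t)) (L x)" "\<And>x. x \<in> U \<Longrightarrow> L x 0 = z"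
    and x1: "x1 \<in> U" and t: "t \<in> {0..1}"
  shows "isCont (\<lambda>x. L x t) x1"
proof (rule connected_induction_simple[where P = "\<lambda>t. isCont (\<lambda>x. L x t) x1", of "{0..1}" 0 t])
  have "eventually (\<lambda>x. L x 0 = z) (nhds x1)"
    unfolding eventually_nhds using L(2) U x1 by blast
  then show "isCont (\<lambda>x. L x 0) x1"
    by (simp add: isCont_cong)
qed (use t lift_continuous_in_parameter_step[OF U H L(1) x1] in auto)

end

section \<open>Local triviality over a contractible chart\<close>

locale contraction_chart = continuable_local_homeomorphism Z \<pi> P
  for Z :: "'a::metric_space set" and \<pi> :: "'a \<Rightarrow> 'x::metric_space" and P +
  fixes x0 :: 'x and U :: "'x set" and H :: "'x \<times> real \<Rightarrow> 'x"
  assumes open_U: "open U" and H_cont: "continuous_on (U \<times> {0..1}) H"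
    and H_start: "\<And>x. x \<in> U \<Longrightarrow> H (x, 0) = x0" and H_end: "\<And>x. x \<in> U \<Longrightarrow> H (x, 1) = x"
    and H_tracks: "\<And>x. x \<in> U \<Longrightarrow> in_paths P (\<lambda>t. H (x, t))"
begin

definition sheet :: "'a \<Rightarrow> 'x \<Rightarrow> 'a" where
  "sheet z x = path_lift z (\<lambda>t. H (x, t)) 1"

lemma track_lift:
  assumes "z \<in> Z" "\<pi> z = x0" "x \<in> U"
  shows "is_lift {0..1} (\<lambda>t. H (x, t)) (path_lift z (\<lambda>t. H (x, t)))"
    "path_lift z (\<lambda>t. H (x, t)) 0 = z"
  using path_lift_is_lift[OF H_tracks[OF assms(3)] assms(1)] H_start[OF assms(3)] assms(2) by simp_all

lemma sheet_section:
  assumes "z \<in> Z" "\<pi> z = x0" "x \<in> U"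
  shows "sheet z x \<in> Z" "\<pi> (sheet z x) = x"
  using track_lift[OF assms] H_end[OF assms(3)] unfolding sheet_def is_lift_def by auto

lemma continuous_on_sheet:
  assumes "z \<in> Z" "\<pi> z = x0"
  shows "continuous_on U (sheet z)"
  unfolding sheet_def
  by (intro continuous_at_imp_continuous_on ballI lift_continuous_in_parameter[OF open_U H_cont])
     (use track_lift[OF assms] in auto)

lemma sheet_inject:
  assumes "z1 \<in> Z" "\<pi> z1 = x0" "z2 \<in> Z" "\<pi> z2 = x0" "x \<in> U" "sheet z1 x = sheet z2 x"
  shows "z1 = z2"
proof -
  have "path_lift z1 (\<lambda>t. H (x, t)) 0 = path_lift z2 (\<lambda>t. H (x, t)) 0"
    by (rule is_lift_unique[OF track_lift(1)[OF assms(1,2,5)] track_lift(1)[OF assms(3,4,5)], where a = 1])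
       (use assms(6) in \<open>auto simp: sheet_def\<close>)
  then show ?thesis
    using track_lift(2)[OF assms(1,2,5)] track_lift(2)[OF assms(3,4,5)] by simp
qed

lemma sheet_onto:
  assumes "y \<in> Z" "\<pi> y \<in> U"
  obtains z where "z \<in> Z" "\<pi> z = x0" "sheet z (\<pi> y) = y"
proof -
  define x where "x = \<pi> y"
  have x: "x \<in> U"
    using assms(2) by (simp add: x_def)
  define r where "r = path_lift y (reversepath (\<lambda>t. H (x, t)))"
  have "in_paths P (reversepath (\<lambda>t. H (x, t)))"
    by (rule in_paths_reversepath[OF H_tracks[OF x]])
  moreover have "\<pi> y = reversepath (\<lambda>t. H (x, t)) 0"
    using H_end[OF x] by (simp add: reversepath_def x_def)
  ultimately have r: "is_lift {0..1} (reversepath (\<lambda>t. H (x, t))) r" "r 0 = y"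
    using path_lift_is_lift assms(1) unfolding r_def by blast+
  have r1: "r 1 \<in> Z" "\<pi> (r 1) = x0"
    using r(1) H_start[OF x] by (auto simp: is_lift_def reversepath_def)
  have "continuous_on {0..1} (reversepath r)"
    using r(1) path_reversepath unfolding is_lift_def path_def by blast
  moreover have "reversepath r ` {0..1} \<subseteq> Z"
    using r(1) path_image_reversepath[of r] unfolding is_lift_def path_image_def by simp
  moreover have "\<forall>t\<in>{0..1}. \<pi> (reversepath r t) = H (x, t)"
    using r(1) unfolding is_lift_def by (auto simp: reversepath_def)
  ultimately have "is_lift {0..1} (\<lambda>t. H (x, t)) (reversepath r)"
    by (simp add: is_lift_def)
  then have "path_lift (r 1) (\<lambda>t. H (x, t)) 1 = reversepath r 1"
    by (rule is_lift_unique[OF track_lift(1)[OF r1 x], where a = 0])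
       (auto simp: track_lift(2)[OF r1 x] reversepath_def)
  then have "sheet (r 1) x = y"
    using r(2) by (simp add: sheet_def reversepath_def)
  then show ?thesis
    using that r1 unfolding x_def by blast
qed

definition sheets :: "'a set set" where
  "sheets = (\<lambda>z. sheet z ` U) ` (Z \<inter> \<pi> -` {x0})"

lemma Union_sheets: "\<Union>sheets = Z \<inter> \<pi> -` U"
proof
  show "\<Union>sheets \<subseteq> Z \<inter> \<pi> -` U"
  proof
    fix y assume "y \<in> \<Union>sheets"
    then obtain z x where "z \<in> Z" "\<pi> z = x0" "x \<in> U" "y = sheet z x"
      by (auto simp: sheets_def)
    then show "y \<in> Z \<inter> \<pi> -` U"
      using sheet_section by simp
  qed
  show "Z \<inter> \<pi> -` U \<subseteq> \<Union>sheets"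
  proof
    fix y assume y: "y \<in> Z \<inter> \<pi> -` U"
    then obtain z where z: "z \<in> Z" "\<pi> z = x0" "sheet z (\<pi> y) = y"
      using sheet_onto[of y] by blast
    have "sheet z (\<pi> y) \<in> sheet z ` U"
      using y by simp
    then show "y \<in> \<Union>sheets"
      using z by (auto simp: sheets_def)
  qed
qed

lemma sheets_openin: "u \<in> sheets \<Longrightarrow> openin (top_of_set Z) u"
  using local_homeomorphism_section_image_open[OF local_homeo _ continuous_on_sheet]
    sheet_section open_U
  unfolding sheets_def by auto

lemma sheets_disjoint: "pairwise disjnt sheets"
proof (rule pairwiseI)
  fix a b assume "a \<in> sheets" "b \<in> sheets" "a \<noteq> b"
  then obtain z1 z2 where z: "z1 \<in> Z" "\<pi> z1 = x0" "z2 \<in> Z" "\<pi> z2 = x0"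
      "a = sheet z1 ` U" "b = sheet z2 ` U" "z1 \<noteq> z2"
    unfolding sheets_def by blast
  show "disjnt a b"
    unfolding disjnt_def
  proof (rule ccontr)
    assume "a \<inter> b \<noteq> {}"
    then obtain x1 x2 where x: "x1 \<in> U" "x2 \<in> U" "sheet z1 x1 = sheet z2 x2"
      using z by blast
    then have "x1 = x2"
      using sheet_section z(1-4) by metis
    then show False
      using sheet_inject z x by blast
  qed
qed

lemma sheet_homeomorphism:
  assumes "z \<in> Z" "\<pi> z = x0"
  shows "homeomorphism (sheet z ` U) U \<pi> (sheet z)"
  unfolding homeomorphism_def
proof (intro conjI ballI)
  show "continuous_on (sheet z ` U) \<pi>"
    using local_homeomorphism_imp_continuous_on[OF local_homeo] sheet_section[OF assms]
    by (auto intro: continuous_on_subset)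
  show "\<pi> ` sheet z ` U = U"
    using sheet_section[OF assms] by (force simp: image_image)
qed (use continuous_on_sheet[OF assms] sheet_section[OF assms] in auto)

lemma local_trivialization:
  "\<exists>v. \<Union>v = Z \<inter> \<pi> -` U \<and> (\<forall>u\<in>v. openin (top_of_set Z) u) \<and> pairwise disjnt v \<and>
       (\<forall>u\<in>v. \<exists>q. homeomorphism u U \<pi> q)"
proof (intro exI[of _ sheets] conjI ballI)
  fix u assume "u \<in> sheets"
  then show "\<exists>q. homeomorphism u U \<pi> q"
    using sheet_homeomorphism unfolding sheets_def by blast
qed (use Union_sheets sheets_openin sheets_disjoint in auto)

end

context continuable_local_homeomorphism
begin

lemma covering_space:
  assumes "Z \<noteq> {}"
  shows "covering_space Z \<pi> UNIV"
proof
  show "continuous_on Z \<pi>"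
    by (rule local_homeomorphism_imp_continuous_on[OF local_homeo])
  show "\<pi> ` Z = UNIV"
    by (rule projection_surjective[OF assms])
  fix x :: 'x
  obtain U H where "open U" "x \<in> U" "continuous_on (U \<times> {0..1}) H"
      "\<And>y. y \<in> U \<Longrightarrow> H (y, 0) = x" "\<And>y. y \<in> U \<Longrightarrow> H (y, 1) = y"
      "\<And>y. y \<in> U \<Longrightarrow> in_paths P (\<lambda>t. H (y, t))"
    using locally_P_contractibleE[OF contractible_by_P, where a = x] by metis
  then interpret contraction_chart Z \<pi> P x U H
    by unfold_locales
  show "\<exists>T. x \<in> T \<and> openin (top_of_set UNIV) T \<and>
          (\<exists>v. \<Union>v = Z \<inter> \<pi> -` T \<and> (\<forall>u\<in>v. openin (top_of_set Z) u) \<and> pairwise disjnt v \<and>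
               (\<forall>u\<in>v. \<exists>q. homeomorphism u T \<pi> q))"
    using local_trivialization \<open>open U\<close> \<open>x \<in> U\<close> by auto
qed

end

theorem mainTheorem18:
  fixes f :: "'x::metric_space \<times> 'y::metric_space \<Rightarrow> 'w::metric_space"
    and w :: 'w
    and P :: "(real \<Rightarrow> 'x) set"
  assumes "continuous_on UNIV f"
    and "\<forall>p\<in>P. path p"
    and "simply_connected (UNIV :: 'x set)"
    and "P_connected P"
    and "locally_P_contractible P"
    and "local_homeomorphism {z. f z = w} fst UNIV"
    and "\<forall>p\<in>P. continuation_property {z. f z = w} fst p"
  shows "({z. f z = w} = {} \<or> covering_space {z. f z = w} fst UNIV) \<and>
         (\<forall>C\<in>components {z. f z = w}. \<exists>g. homeomorphism C UNIV fst g)"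
proof -
  interpret continuable_local_homeomorphism "{z. f z = w}" fst P
    using assms(2,4-7) by unfold_locales auto
  have lpc: "locally path_connected (UNIV :: 'x set)"
    by (rule locally_P_contractible_imp_locally_path_connected[OF assms(5)])
  show ?thesis
  proof (intro conjI ballI)
    show "{z. f z = w} = {} \<or> covering_space {z. f z = w} fst UNIV"
      using covering_space by blast
    fix C assume C: "C \<in> components {z. f z = w}"
    then have "{z. f z = w} \<noteq> {}"
      using in_components_nonempty in_components_subset by blast
    then show "\<exists>g. homeomorphism C UNIV fst g"
      using covering_space_component_homeomorphism[OF covering_space assms(3) lpc C] by blast
  qed
qed

end
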